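(* Let $P$ and $\mathcal{R}$ be as below, $R\in\mathcal{R}$, and let $p$ be the point of $P\cap R$ with the largest $x$-coordinate. Then $\textsc{Piece}(R,p)$ consists of a single slab; that is, neither $\textsc{Upb}(R,p)$ nor $\textsc{Lpb}(R,p)$ exists, so $\textsc{Slab}(R,p)=\textsc{Piece}(R,p)$.
   Context: $P$ is a finite point set and $\mathcal{R}$ a finite family of non-piercing axis-parallel rectangles (for any $R_1,R_2$, $R_1\setminus R_2$ connected), in general position (distinct coordinates, no point on a rectangle boundary). For a rectangle $R'$ write $y_\pm(R')$ for the $y$-coordinates of its upper/lower sides. A set $S$ discretely pierces a rectangle $R'$ if $R'\setminus S$ has two components each containing a point of $P$. Let $\ell_p$ be the vertical line through $p$. $\textsc{Active}(p)$ is the set of rectangles of $\mathcal{R}$ discretely pierced by $\ell_p$ or containing $p$; $\textsc{Above}(p)=\{R'\in\textsc{Active}(p):y_-(R')>y(p)\}$, $\textsc{Below}(p)=\{R'\in\textsc{Active}(p):y_+(R')<y(p)\}$. $\textsc{Piece}(R,p)=R\cap\{x\le x(p)\}$. $\textsc{Upb}(R,p)$ is the rectangle of $\textsc{Above}(p)$ discretely pierced by $\textsc{Piece}(R,p)$ with smallest $y_+$, and $\textsc{Lpb}(R,p)$ the rectangle of $\textsc{Below}(p)$ discretely pierced by $\textsc{Piece}(R,p)$ with largest $y_-$, if such rectangles exist. The horizontal lines $y=y_+(\textsc{Upb}(R,p))$ and $y=y_-(\textsc{Lpb}(R,p))$ (when these exist) split $\textsc{Piece}(R,p)$ into at most three slabs;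 $\textsc{Slab}(R,p)$ is the one containing $p$. *)

theory Defs
  imports "HOL-Analysis.Analysis"
begin

type_synonym point = "real \<times> real"

record rect =
  xl :: real
  xr :: real
  yl :: real
  yu :: real

definition valid_rect :: "rect \<Rightarrow> bool" where
  "valid_rect R \<longleftrightarrow> xl R < xr R \<and> yl R < yu R"

definition rset :: "rect \<Rightarrow> point set" where
  "rset R = {q. xl R \<le> fst q \<and> fst q \<le> xr R \<and> yl R \<le> snd q \<and> snd q \<le> yu R}"

abbreviation yplus :: "rect \<Rightarrow> real" where "yplus R \<equiv> yu R"
abbreviation yminus :: "rect \<Rightarrow> real" where "yminus R \<equiv> yl R"

definition non_piercing :: "rect set \<Rightarrow> bool" where
  "non_piercing \<R> \<longleftrightarrow> (\<forall>R1\<in>\<R>. \<forall>R2\<in>\<R>. connected (rset R1 - rset R2))"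

fun xcoord :: "point + (rect \<times> bool) \<Rightarrow> real" where
  "xcoord (Inl p) = fst p"
| "xcoord (Inr (R, b)) = (if b then xr R else xl R)"

fun ycoord :: "point + (rect \<times> bool) \<Rightarrow> real" where
  "ycoord (Inl p) = snd p"
| "ycoord (Inr (R, b)) = (if b then yu R else yl R)"

definition general_position :: "point set \<Rightarrow> rect set \<Rightarrow> bool" where
  "general_position P \<R> \<longleftrightarrow>
     inj_on xcoord (Inl ` P \<union> Inr ` (\<R> \<times> UNIV)) \<and>
     inj_on ycoord (Inl ` P \<union> Inr ` (\<R> \<times> UNIV)) \<and>
     (\<forall>p\<in>P. \<forall>R\<in>\<R>. p \<notin> frontier (rset R))"

definition disc_pierces :: "point set \<Rightarrow> point set \<Rightarrow> rect \<Rightarrow> bool" where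
  "disc_pierces P S R' \<longleftrightarrow>
     card (components (rset R' - S)) = 2 \<and>
     (\<forall>C\<in>components (rset R' - S). C \<inter> P \<noteq> {})"

definition vline :: "point \<Rightarrow> point set" where
  "vline p = {q. fst q = fst p}"

definition Active :: "point set \<Rightarrow> rect set \<Rightarrow> point \<Rightarrow> rect set" where
  "Active P \<R> p = {R'\<in>\<R>. disc_pierces P (vline p) R' \<or> p \<in> rset R'}"

definition Above :: "point set \<Rightarrow> rect set \<Rightarrow> point \<Rightarrow> rect set" where
  "Above P \<R> p = {R'\<in>Active P \<R> p. yminus R' > snd p}"

definition Below :: "point set \<Rightarrow> rect set \<Rightarrow> point \<Rightarrow> rect set" where
  "Below P \<R> p = {R'\<in>Active P \<R> p. yplus R' < snd p}"

definition Piece :: "rect \<Rightarrow> point \<Rightarrow> point set" where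
  "Piece R p = rset R \<inter> {q. fst q \<le> fst p}"

definition upb_cands :: "point set \<Rightarrow> rect set \<Rightarrow> rect \<Rightarrow> point \<Rightarrow> rect set" where
  "upb_cands P \<R> R p = {R'\<in>Above P \<R> p. disc_pierces P (Piece R p) R'}"

definition lpb_cands :: "point set \<Rightarrow> rect set \<Rightarrow> rect \<Rightarrow> point \<Rightarrow> rect set" where
  "lpb_cands P \<R> R p = {R'\<in>Below P \<R> p. disc_pierces P (Piece R p) R'}"

definition Upb :: "point set \<Rightarrow> rect set \<Rightarrow> rect \<Rightarrow> point \<Rightarrow> rect option" where
  "Upb P \<R> R p = (if upb_cands P \<R> R p = {} then None
     else Some (ARG_MIN yplus R'. R' \<in> upb_cands P \<R> R p))"

definition Lpb :: "point set \<Rightarrow> rect set \<Rightarrow> rect \<Rightarrow> point \<Rightarrow> rect option" where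
  "Lpb P \<R> R p = (if lpb_cands P \<R> R p = {} then None
     else Some (ARG_MAX yminus R'. R' \<in> lpb_cands P \<R> R p))"

text \<open>The slab of Piece(R,p) containing p (p lies below Upb and above Lpb).\<close>
definition Slab :: "point set \<Rightarrow> rect set \<Rightarrow> rect \<Rightarrow> point \<Rightarrow> point set" where
  "Slab P \<R> R p = Piece R p \<inter>
     {q. case Upb P \<R> R p of None \<Rightarrow> True | Some U \<Rightarrow> snd q \<le> yplus U} \<inter>
     {q. case Lpb P \<R> R p of None \<Rightarrow> True | Some L \<Rightarrow> yminus L \<le> snd q}"

end

theory Submission
  imports Defs
begin

text \<open>Every point of \<open>P\<close> in \<open>R' - Piece(R,p)\<close> lies outside \<open>R\<close>, because \<open>p\<close> is the rightmost
  point of \<open>P\<close> in \<open>R\<close>. So all these points lie in \<open>R' - R\<close>, which is connected by non-piercing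
  and contained in \<open>R' - Piece(R,p)\<close>; hence they all lie in a single component, and
  \<open>Piece(R,p)\<close> discretely pierces no rectangle of the family. In particular there are no
  candidates for \<open>Upb(R,p)\<close> and \<open>Lpb(R,p)\<close>.\<close>

lemma components_meeting_contain_connected:
  assumes "connected S" "S \<subseteq> A" "P \<inter> A \<subseteq> S"
    and "C \<in> components A" "C \<inter> P \<noteq> {}"
  shows "S \<subseteq> C"
proof (rule components_maximal[OF \<open>C \<in> components A\<close> \<open>connected S\<close> \<open>S \<subseteq> A\<close>])
  have "C \<subseteq> A" using \<open>C \<in> components A\<close> by (rule in_components_subset)
  then show "C \<inter> S \<noteq> {}" using \<open>C \<inter> P \<noteq> {}\<close> \<open>P \<inter> A \<subseteq> S\<close> by blast
qed

lemma components_meeting_unique: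
  assumes "connected S" "S \<subseteq> A" "P \<inter> A \<subseteq> S"
    and "C1 \<in> components A" "C1 \<inter> P \<noteq> {}"
    and "C2 \<in> components A" "C2 \<inter> P \<noteq> {}"
  shows "C1 = C2"
proof -
  have "C1 \<subseteq> A" using \<open>C1 \<in> components A\<close> by (rule in_components_subset)
  then have "C1 \<inter> S \<noteq> {}" using \<open>C1 \<inter> P \<noteq> {}\<close> \<open>P \<inter> A \<subseteq> S\<close> by blast
  moreover have "S \<subseteq> C2"
    using components_meeting_contain_connected assms(1-3,6,7) .
  ultimately have "C1 \<inter> C2 \<noteq> {}" by blast
  then show ?thesis using components_nonoverlap assms(4,6) by blast
qed

lemma not_disc_pierces_if_points_in_connected:
  assumes "connected S" "S \<subseteq> rset R' - T" "P \<inter> (rset R' - T) \<subseteq> S"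
  shows "\<not> disc_pierces P T R'"
proof
  assume "disc_pierces P T R'"
  then have two: "card (components (rset R' - T)) = 2"
    and meets: "\<forall>C\<in>components (rset R' - T). C \<inter> P \<noteq> {}"
    unfolding disc_pierces_def by auto
  from two[unfolded card_2_iff] obtain C1 C2
    where "C1 \<noteq> C2" and "components (rset R' - T) = {C1, C2}"
    by blast
  then have C1: "C1 \<in> components (rset R' - T)" and C2: "C2 \<in> components (rset R' - T)"
    by simp_all
  have "C1 = C2"
    using components_meeting_unique[OF assms C1 _ C2] meets C1 C2 by simp
  with \<open>C1 \<noteq> C2\<close> show False ..
qed

lemma not_disc_pierces_Piece_rightmost:
  assumes "connected (rset R' - rset R)"
    and "\<forall>q\<in>P \<inter> rset R. fst q \<le> fst p"
  shows "\<not> disc_pierces P (Piece R p) R'"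
proof (rule not_disc_pierces_if_points_in_connected[OF assms(1)])
  show "rset R' - rset R \<subseteq> rset R' - Piece R p"
    unfolding Piece_def by blast
  show "P \<inter> (rset R' - Piece R p) \<subseteq> rset R' - rset R"
    using assms(2) unfolding Piece_def by blast
qed

theorem lemma7:
  fixes P :: "point set" and \<R> :: "rect set" and R :: rect and p :: point
  assumes "finite P" and "finite \<R>"
    and "\<forall>R'\<in>\<R>. valid_rect R'"
    and "non_piercing \<R>"
    and "general_position P \<R>"
    and "R \<in> \<R>"
    and "p \<in> P \<inter> rset R"
    and "\<forall>q\<in>P \<inter> rset R. fst q \<le> fst p"
  shows "Upb P \<R> R p = None \<and> Lpb P \<R> R p = None \<and> Slab P \<R> R p = Piece R p"
proof -
  have not_pierced: "\<not> disc_pierces P (Piece R p) R'" if "R' \<in> \<R>" for R'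
    using not_disc_pierces_Piece_rightmost assms(4,6,8) that
    unfolding non_piercing_def by blast
  have "upb_cands P \<R> R p = {}" "lpb_cands P \<R> R p = {}"
    using not_pierced
    unfolding upb_cands_def lpb_cands_def Above_def Below_def Active_def by auto
  then show ?thesis
    unfolding Upb_def Lpb_def Slab_def by simp
qed

end
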